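(* Assume (A3) and (A4). Let $x:[t_0,\infty)\to\mathcal H$ be any function with $x(t_0)=x_0$ and $x(t)\in\mathcal L(F,F(x_0)+a)$ for all $t\ge t_0$, where $a$ is the vector from (A3). For $t\ge t_0$ let $z(t):=\operatorname{argmin}_{z\in\mathcal H}\max_i(f_i(z)-f_i(x(t)))+\frac{\beta}{2t^p}\|z\|^2$. Then $\|z(t)\|\le R$ for all $t\ge t_0$, with $R$ the constant from (A3).
   Context: $\mathcal H$ is a real Hilbert space; $f_1,\dots,f_m:\mathcal H\to\mathbb R$ are convex, continuously differentiable with Lipschitz continuous gradients; $F=(f_1,\dots,f_m)^\top$. Weak Pareto optimal: no $x$ with $f_i(x)<f_i(x^* )$ for all $i$; $\mathcal P_w$ is the set of such points. $\mathcal L(F,b):=\{x: f_i(x)\le b_i\ \forall i\}$, $\mathcal{LP}_w(F,b):=\mathcal L(F,b)\cap\mathcal P_w$. Fixed data: $t_0>0$, $\beta>0$, $p\in(0,2]$, $x_0,v_0\in\mathcal H$. (A3): with $a\in\mathbb R^m$, $a_i:=\frac{\beta}{2t_0^p}\|x_0\|^2+\frac12\|v_0\|^2$, for every $x\in\mathcal L(F,F(x_0)+a)$ one has $\mathcal{LP}_w(F,F(x))\ne\emptyset$, and $R:=\sup_{F^*\in F(\mathcal{LP}_w(F,F(x_0)+a))}\inf_{z\in F^{-1}(\{F^*\})}\|z\|<\infty$. (A4): for every $w\in\mathbb R^m$ the set $S(w):=\operatorname{argmin}_z\max_i(f_i(z)-w_i)$ is nonempty and $w\mapsto\operatorname{proj}_{S(w)}(0)$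 is continuous. *)

theory Defs
  imports "HOL-Analysis.Analysis"
begin

text \<open>Objectives are indexed by a finite nonempty type 'i (so m = CARD('i) \<ge> 1);
  the Hilbert space is a type of class {real_inner, complete_space}.\<close>

definition Fv :: "('i \<Rightarrow> 'a \<Rightarrow> real) \<Rightarrow> 'a \<Rightarrow> ('i \<Rightarrow> real)" where
  "Fv f x = (\<lambda>i. f i x)"

definition weak_pareto :: "('i \<Rightarrow> 'a \<Rightarrow> real) \<Rightarrow> 'a set" where
  "weak_pareto f = {xs. \<not> (\<exists>x. \<forall>i. f i x < f i xs)}"

definition level_set :: "('i \<Rightarrow> 'a \<Rightarrow> real) \<Rightarrow> ('i \<Rightarrow> real) \<Rightarrow> 'a set" where
  "level_set f b = {x. \<forall>i. f i x \<le> b i}"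

definition LPw :: "('i \<Rightarrow> 'a \<Rightarrow> real) \<Rightarrow> ('i \<Rightarrow> real) \<Rightarrow> 'a set" where
  "LPw f b = level_set f b \<inter> weak_pareto f"

text \<open>Metric projection of a point onto a set (as the library's closest_point, which
  however requires heine_borel).\<close>
definition proj :: "'a::real_normed_vector set \<Rightarrow> 'a \<Rightarrow> 'a" where
  "proj S a = (SOME x. x \<in> S \<and> (\<forall>y\<in>S. dist a x \<le> dist a y))"

definition Smin :: "('i::finite \<Rightarrow> 'a \<Rightarrow> real) \<Rightarrow> ('i \<Rightarrow> real) \<Rightarrow> 'a set" where
  "Smin f w = {z. \<forall>z'. Max (range (\<lambda>i. f i z - w i)) \<le> Max (range (\<lambda>i. f i z' - w i))}"

definition Rconst :: "('i \<Rightarrow> 'a::real_normed_vector \<Rightarrow> real) \<Rightarrow> ('i \<Rightarrow> real) \<Rightarrow> real" where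
  "Rconst f b = Sup ((\<lambda>Fs. Inf {norm z | z. Fv f z = Fs}) ` (Fv f ` LPw f b))"

end

theory Submission
  imports Defs
begin

text \<open>Write \<open>M u = max\<^sub>i (f\<^sub>i u - f\<^sub>i (x t))\<close>. Since \<open>M (x t) = 0\<close>, one of \<open>z\<close> and \<open>x t\<close>
  lies in the level set of \<open>F (x t)\<close> and has \<open>M\<close>-value at most \<open>M z\<close>; by (A3) it is dominated
  by a weakly Pareto optimal point \<open>y\<close> of the level set \<open>\<L>(F, F(x\<^sub>0) + a)\<close>. Every \<open>w\<close> with
  \<open>F w = F y\<close> then satisfies \<open>M w \<le> M z\<close>, so minimality of \<open>z\<close> for \<open>M + c\<parallel>\<cdot>\<parallel>\<^sup>2\<close> forces
  \<open>\<parallel>z\<parallel> \<le> \<parallel>w\<parallel>\<close>; taking the infimum over \<open>w\<close> gives \<open>\<parallel>z\<parallel> \<le> R\<close>.\<close>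

lemma Max_range_mono:
  fixes g h :: "'i::finite \<Rightarrow> 'b::linorder"
  assumes "\<And>i. g i \<le> h i"
  shows "Max (range g) \<le> Max (range h)"
proof -
  have "g i \<le> Max (range h)" for i
  proof -
    have "h i \<le> Max (range h)" by (rule Max_ge) auto
    then show ?thesis using assms[of i] by (rule order_trans[rotated])
  qed
  then show ?thesis by (simp add: Max_le_iff)
qed

lemma level_set_trans:
  assumes "u \<in> level_set f (Fv f v)" and "v \<in> level_set f b"
  shows "u \<in> level_set f b"
  using assms by (auto simp: level_set_def Fv_def intro: order_trans)

lemma norm_le_of_penalized_minimizer:
  fixes z w :: "'a::real_normed_vector"
  assumes min: "\<And>u. \<phi> z + c * (norm z)\<^sup>2 \<le> \<phi> u + c * (norm u)\<^sup>2"
    and c: "c > 0" and le: "\<phi> w \<le> \<phi> z"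
  shows "norm z \<le> norm w"
proof -
  have "c * (norm z)\<^sup>2 \<le> c * (norm w)\<^sup>2" using min[of w] le by linarith
  then have "(norm z)\<^sup>2 \<le> (norm w)\<^sup>2" using c by simp
  then show ?thesis by (simp add: power2_le_iff_abs_le)
qed

lemma norm_le_Rconst:
  assumes y: "y \<in> LPw f b"
    and bdd: "bdd_above ((\<lambda>Fs. Inf {norm z | z. Fv f z = Fs}) ` (Fv f ` LPw f b))"
    and below: "\<And>w. Fv f w = Fv f y \<Longrightarrow> norm z \<le> norm w"
  shows "norm z \<le> Rconst f b"
proof -
  have "norm z \<le> Inf {norm w | w. Fv f w = Fv f y}"
    by (rule cInf_greatest) (use below in auto)
  also have "\<dots> \<le> Rconst f b"
    unfolding Rconst_def by (rule cSUP_upper) (use y bdd in auto)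
  finally show ?thesis .
qed

lemma exists_LPw_max_gap_le:
  fixes f :: "'i::finite \<Rightarrow> 'a \<Rightarrow> real"
  assumes ne: "\<forall>u \<in> level_set f b. LPw f (Fv f u) \<noteq> {}"
    and v: "v \<in> level_set f b"
  obtains y where "y \<in> LPw f b"
    and "Max (range (\<lambda>i. f i y - f i v)) \<le> Max (range (\<lambda>i. f i z - f i v))"
proof -
  let ?M = "\<lambda>u. Max (range (\<lambda>i. f i u - f i v))"
  obtain u where u: "u \<in> level_set f (Fv f v)" and Mu: "?M u \<le> ?M z"
  proof (cases "?M z \<le> 0")
    case True
    have "f i z - f i v \<le> ?M z" for i by (rule Max_ge) auto
    with True have "z \<in> level_set f (Fv f v)" by (auto simp: level_set_def Fv_def)
    then show ?thesis using that by blast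
  next
    case False
    have "range (\<lambda>i. f i v - f i v) = {0}" by auto
    then have "?M v = 0" by simp
    then have "?M v \<le> ?M z" using False by linarith
    then show ?thesis by (rule that[rotated]) (simp add: level_set_def Fv_def)
  qed
  have ub: "u \<in> level_set f b" using level_set_trans[OF u v] .
  then obtain y where y: "y \<in> LPw f (Fv f u)" using ne by blast
  then have fy: "f i y \<le> f i u" for i by (auto simp: LPw_def level_set_def Fv_def)
  show ?thesis
  proof
    show "y \<in> LPw f b"
      using y level_set_trans[OF _ ub, of y] by (auto simp: LPw_def)
    have "?M y \<le> ?M u" by (rule Max_range_mono) (use fy in simp)
    then show "?M y \<le> ?M z" using Mu by linarith
  qed
qed

theorem mainTheorem6:
  fixes f :: "'i::finite \<Rightarrow> 'a::{real_inner,complete_space} \<Rightarrow> real"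
    and t0 \<beta> p :: real and x0 v0 :: 'a and x :: "real \<Rightarrow> 'a"
  assumes t0: "t0 > 0" and beta: "\<beta> > 0" and p: "0 < p" "p \<le> 2"
    and conv: "\<And>i. convex_on UNIV (f i)"
    and smooth: "\<And>i. \<exists>g L. (\<forall>y. (f i has_derivative (\<lambda>h. inner (g y) h)) (at y))
                         \<and> (\<forall>y y'. norm (g y - g y') \<le> L * norm (y - y'))"
    and A3_ne: "\<forall>y \<in> level_set f (\<lambda>i. f i x0 + (\<beta> / (2 * t0 powr p) * (norm x0)\<^sup>2 + (norm v0)\<^sup>2 / 2)).
                   LPw f (Fv f y) \<noteq> {}"
    and A3_bdd: "bdd_above ((\<lambda>Fs. Inf {norm z | z. Fv f z = Fs}) `
                   (Fv f ` LPw f (\<lambda>i. f i x0 + (\<beta> / (2 * t0 powr p) * (norm x0)\<^sup>2 + (norm v0)\<^sup>2 / 2))))"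
    and A4_ne: "\<And>w. Smin f w \<noteq> {}"
    and A4_cont: "continuous_on UNIV (\<lambda>w. proj (Smin f w) 0)"
    and x_init: "x t0 = x0"
    and x_level: "\<And>t. t \<ge> t0 \<Longrightarrow>
        x t \<in> level_set f (\<lambda>i. f i x0 + (\<beta> / (2 * t0 powr p) * (norm x0)\<^sup>2 + (norm v0)\<^sup>2 / 2))"
  shows "\<forall>t \<ge> t0. \<forall>z.
           (\<forall>z'. Max (range (\<lambda>i. f i z - f i (x t))) + \<beta> / (2 * t powr p) * (norm z)\<^sup>2
                 \<le> Max (range (\<lambda>i. f i z' - f i (x t))) + \<beta> / (2 * t powr p) * (norm z')\<^sup>2)
           \<longrightarrow> norm z \<le> Rconst f (\<lambda>i. f i x0 + (\<beta> / (2 * t0 powr p) * (norm x0)\<^sup>2 + (norm v0)\<^sup>2 / 2))"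
proof (intro allI impI)
  fix t z
  assume t: "t \<ge> t0"
  let ?M = "\<lambda>u. Max (range (\<lambda>i. f i u - f i (x t)))"
  assume min: "\<forall>z'. ?M z + \<beta> / (2 * t powr p) * (norm z)\<^sup>2 \<le> ?M z' + \<beta> / (2 * t powr p) * (norm z')\<^sup>2"
  obtain y where y: "y \<in> LPw f (\<lambda>i. f i x0 + (\<beta> / (2 * t0 powr p) * (norm x0)\<^sup>2 + (norm v0)\<^sup>2 / 2))"
    and My: "?M y \<le> ?M z"
    using exists_LPw_max_gap_le[OF A3_ne x_level[OF t]] by blast
  have "norm z \<le> norm w" if "Fv f w = Fv f y" for w
  proof (rule norm_le_of_penalized_minimizer[where \<phi> = ?M and c = "\<beta> / (2 * t powr p)"])
    show "?M w \<le> ?M z" using that My by (simp add: Fv_def fun_eq_iff)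
  qed (use min beta t0 t in auto)
  then show "norm z \<le> Rconst f (\<lambda>i. f i x0 + (\<beta> / (2 * t0 powr p) * (norm x0)\<^sup>2 + (norm v0)\<^sup>2 / 2))"
    using norm_le_Rconst[OF y A3_bdd] by blast
qed

end
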